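(* Let $\mathcal X,\mathcal Y$ be Polish spaces, $c:\mathcal X\times\mathcal Y\to\mathbb R$ a measurable cost function bounded from below, $\varepsilon>0$, and $\tilde\mu\in\mathcal P(\mathcal X)$. Let $\mathcal F\subseteq L^{\exp}_\varepsilon(\tilde\mu)$ be a class of functions on $\mathcal X$, and let $\mathcal F^{(c,\varepsilon)}_{\tilde\mu}=\{\phi^{(c,\varepsilon)}_{\tilde\mu}\mid\phi\in\mathcal F\}$. Then for every $\delta>0$, \[ N(\delta,\mathcal F^{(c,\varepsilon)}_{\tilde\mu},\|\cdot\|_\infty)\le N(\delta/2,\mathcal F,\|\cdot\|_\infty). \]
   Context: $\exp_\varepsilon(t)=\exp(t/\varepsilon)$. $L^{\exp}_\varepsilon(\tilde\mu)$ is the set of measurable $\phi:\mathcal X\to[-\infty,\infty)$ with $0<\int\exp_\varepsilon(\phi)\,d\tilde\mu<\infty$. For such $\phi$, $\phi^{(c,\varepsilon)}_{\tilde\mu}(y)=-\varepsilon\log\int_{\mathcal X}\exp_\varepsilon(\phi(x)-c(x,y))\,d\tilde\mu(x)$, $y\in\mathcal Y$. For a class $\mathcal G$ of real-valued functions on a set $S$ and $\delta>0$, the uniform covering number $N(\delta,\mathcal G,\|\cdot\|_\infty)$ is the smallest $n\in\mathbb N$ such that there exist $f_1,\dots,f_n:S\to\mathbb R$ with $\sup_{f\in\mathcal G}\min_i\|f-f_i\|_\infty\le\delta$ (and $+\infty$ if no such $n$ exists), where $\|f\|_\infty=\sup_{s\in S}|f(s)|$. *)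

theory Defs
  imports "HOL-Probability.Probability"
begin

definition exp_eps :: "real \<Rightarrow> ereal \<Rightarrow> real" where
  "exp_eps \<epsilon> t = (if t = -\<infinity> then 0 else exp (real_of_ereal t / \<epsilon>))"

definition Lexp :: "real \<Rightarrow> 'a measure \<Rightarrow> ('a \<Rightarrow> ereal) set" where
  "Lexp \<epsilon> \<mu> = {\<phi>. \<phi> \<in> borel_measurable \<mu> \<and> (\<forall>x. \<phi> x \<noteq> \<infinity>) \<and>
      0 < (\<integral>\<^sup>+ x. ennreal (exp_eps \<epsilon> (\<phi> x)) \<partial>\<mu>) \<and>
      (\<integral>\<^sup>+ x. ennreal (exp_eps \<epsilon> (\<phi> x)) \<partial>\<mu>) < \<infinity>}"

definition ctrans :: "('a \<times> 'b \<Rightarrow> real) \<Rightarrow> real \<Rightarrow> 'a measure \<Rightarrow> ('a \<Rightarrow> ereal) \<Rightarrow> 'b \<Rightarrow> real" where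
  "ctrans c \<epsilon> \<mu> \<phi> y = - \<epsilon> * ln (\<integral>x. exp_eps \<epsilon> (\<phi> x - ereal (c (x, y))) \<partial>\<mu>)"

definition covering_number :: "real \<Rightarrow> ('s \<Rightarrow> ereal) set \<Rightarrow> enat" where
  "covering_number \<delta> G =
     (if \<exists>n. \<exists>f :: nat \<Rightarrow> 's \<Rightarrow> real. \<forall>g\<in>G. \<exists>i<n. \<forall>s. \<bar>g s - ereal (f i s)\<bar> \<le> ereal \<delta>
      then enat (LEAST n. \<exists>f :: nat \<Rightarrow> 's \<Rightarrow> real. \<forall>g\<in>G. \<exists>i<n. \<forall>s. \<bar>g s - ereal (f i s)\<bar> \<le> ereal \<delta>)
      else \<infinity>)"

end

theory Submission imports Defs begin

text \<open>Shifting \<open>\<phi>\<close> by at most \<open>d\<close> multiplies the integral in the entropic transform by at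
  most \<open>exp (d/\<epsilon>)\<close>, so the transform is 1-Lipschitz for the sup-norm. A \<open>\<delta>/2\<close>-cover of \<open>F\<close>
  need not have its centres in \<open>F\<close>; replacing each centre by a member of \<open>F\<close> in its ball
  gives a \<open>\<delta>\<close>-cover of \<open>F\<close> by members of \<open>F\<close>, which the transform maps to a \<open>\<delta>\<close>-cover of
  the transformed class.\<close>

lemma covering_number_le:
  fixes G :: "('s \<Rightarrow> ereal) set" and f :: "nat \<Rightarrow> 's \<Rightarrow> real"
  assumes "\<forall>g\<in>G. \<exists>i<n. \<forall>s. \<bar>g s - ereal (f i s)\<bar> \<le> ereal \<delta>"
  shows "covering_number \<delta> G \<le> enat n"
proof -
  have "(LEAST n. \<exists>f :: nat \<Rightarrow> 's \<Rightarrow> real. \<forall>g\<in>G. \<exists>i<n. \<forall>s. \<bar>g s - ereal (f i s)\<bar> \<le> ereal \<delta>) \<le> n"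
    by (rule Least_le) (use assms in blast)
  with assms show ?thesis
    unfolding covering_number_def by auto
qed

lemma covering_number_enatE:
  fixes G :: "('s \<Rightarrow> ereal) set"
  assumes "covering_number \<delta> G = enat n"
  obtains f :: "nat \<Rightarrow> 's \<Rightarrow> real" where "\<forall>g\<in>G. \<exists>i<n. \<forall>s. \<bar>g s - ereal (f i s)\<bar> \<le> ereal \<delta>"
proof -
  let ?P = "\<lambda>n. \<exists>f :: nat \<Rightarrow> 's \<Rightarrow> real. \<forall>g\<in>G. \<exists>i<n. \<forall>s. \<bar>g s - ereal (f i s)\<bar> \<le> ereal \<delta>"
  have "Ex ?P" and n: "n = Least ?P"
    using assms unfolding covering_number_def by (auto split: if_splits)
  from \<open>Ex ?P\<close> have "?P n"
    unfolding n by (rule LeastI_ex)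
  with that show ?thesis
    by blast
qed

lemma ereal_abs_diff_le_realD:
  assumes "\<bar>x - ereal r\<bar> \<le> ereal d"
  shows "x = ereal (real_of_ereal x)" and "\<bar>real_of_ereal x - r\<bar> \<le> d"
  using assms by (cases x; simp)+

lemma covering_number_image_le_half:
  fixes G :: "('s \<Rightarrow> ereal) set" and T :: "('s \<Rightarrow> ereal) \<Rightarrow> 't \<Rightarrow> real"
  assumes nonexpansive: "\<And>a b t. (\<lambda>s. ereal (a s)) \<in> G \<Longrightarrow> (\<lambda>s. ereal (b s)) \<in> G \<Longrightarrow>
      \<forall>s. \<bar>a s - b s\<bar> \<le> \<delta> \<Longrightarrow> \<bar>T (\<lambda>s. ereal (a s)) t - T (\<lambda>s. ereal (b s)) t\<bar> \<le> \<delta>"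
  shows "covering_number \<delta> ((\<lambda>g t. ereal (T g t)) ` G) \<le> covering_number (\<delta> / 2) G"
proof (cases "covering_number (\<delta> / 2) G")
  case (enat n)
  then obtain f where f: "\<forall>g\<in>G. \<exists>i<n. \<forall>s. \<bar>g s - ereal (f i s)\<bar> \<le> ereal (\<delta> / 2)"
    by (rule covering_number_enatE)
  define near where "near i g \<longleftrightarrow> g \<in> G \<and> (\<forall>s. \<bar>g s - ereal (f i s)\<bar> \<le> ereal (\<delta> / 2))" for i g
  define rep where "rep i = (SOME g. near i g)" for i
  have "\<exists>i<n. \<forall>t. \<bar>T g t - ereal (T (rep i) t)\<bar> \<le> ereal \<delta>" if "g \<in> G" for g
  proof -
    obtain i where "i < n" and g_near: "near i g"
      using f \<open>g \<in> G\<close> unfolding near_def by blast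
    have rep_near: "near i (rep i)"
      unfolding rep_def using g_near by (rule someI[where P = "near i"])
    \<comment> \<open>Being within \<open>\<delta>/2\<close> of a real-valued centre, \<open>g\<close> and \<open>rep i\<close> never take the value \<open>-\<infinity>\<close>.\<close>
    define a where "a s = real_of_ereal (g s)" for s
    define b where "b s = real_of_ereal (rep i s)" for s
    have g_eq: "g = (\<lambda>s. ereal (a s))" and rep_eq: "rep i = (\<lambda>s. ereal (b s))"
      using g_near rep_near ereal_abs_diff_le_realD(1)
      unfolding near_def a_def b_def by (metis (no_types, lifting))+
    have "\<bar>a s - b s\<bar> \<le> \<delta>" for s
    proof -
      have "\<bar>a s - f i s\<bar> \<le> \<delta> / 2" "\<bar>b s - f i s\<bar> \<le> \<delta> / 2"
        using g_near rep_near ereal_abs_diff_le_realD(2)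
        unfolding near_def a_def b_def by blast+
      then show ?thesis
        by linarith
    qed
    then have "\<bar>T g t - T (rep i) t\<bar> \<le> \<delta>" for t
      using nonexpansive g_near rep_near unfolding g_eq rep_eq near_def by blast
    with \<open>i < n\<close> show ?thesis
      by auto
  qed
  then have "covering_number \<delta> ((\<lambda>g t. ereal (T g t)) ` G) \<le> enat n"
    by (intro covering_number_le) auto
  with enat show ?thesis
    by simp
qed simp

lemma ctrans_ereal:
  "ctrans c \<epsilon> \<mu> (\<lambda>x. ereal (a x)) y = - \<epsilon> * ln (\<integral>x. exp ((a x - c (x, y)) / \<epsilon>) \<partial>\<mu>)"
  by (simp add: ctrans_def exp_eps_def)

lemma integrable_exp_diff_cost:
  fixes c :: "'a::topological_space \<times> 'b::topological_space \<Rightarrow> real"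
  assumes sets_\<mu>: "sets \<mu> = sets borel" and c_meas: "c \<in> borel_measurable borel"
    and c_lower: "\<forall>p. m \<le> c p" and "\<epsilon> > 0" and a_Lexp: "(\<lambda>x. ereal (a x)) \<in> Lexp \<epsilon> \<mu>"
  shows "integrable \<mu> (\<lambda>x. exp ((a x - c (x, y)) / \<epsilon>))"
proof -
  have "(\<lambda>x. real_of_ereal (ereal (a x))) \<in> borel_measurable \<mu>"
    using a_Lexp unfolding Lexp_def by (intro borel_measurable_real_of_ereal) auto
  then have a_meas: "a \<in> borel_measurable \<mu>"
    by simp
  have "(\<lambda>x. (x, y)) \<in> borel_measurable borel"
    by (intro borel_measurable_continuous_onI continuous_intros)
  then have "(\<lambda>x. c (x, y)) \<in> borel_measurable borel"
    by (rule measurable_compose[OF _ c_meas])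
  then have c_meas_y: "(\<lambda>x. c (x, y)) \<in> borel_measurable \<mu>"
    using measurable_cong_sets[OF sets_\<mu> refl] by blast
  have "(\<integral>\<^sup>+ x. ennreal (exp (a x / \<epsilon>)) \<partial>\<mu>) < \<infinity>"
    using a_Lexp unfolding Lexp_def exp_eps_def by simp
  then have exp_a_int: "integrable \<mu> (\<lambda>x. exp (a x / \<epsilon>))"
    using a_meas by (intro integrableI_nonneg) auto
  have meas: "(\<lambda>x. exp ((a x - c (x, y)) / \<epsilon>)) \<in> borel_measurable \<mu>"
    using a_meas c_meas_y by measurable
  have bound: "exp ((a x - c (x, y)) / \<epsilon>) \<le> exp (a x / \<epsilon>) * exp (- m / \<epsilon>)" for x
  proof -
    have "(a x - c (x, y)) / \<epsilon> \<le> a x / \<epsilon> + - m / \<epsilon>"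
      using c_lower \<open>\<epsilon> > 0\<close> by (simp add: divide_right_mono diff_divide_distrib)
    then show ?thesis
      by (simp flip: exp_add)
  qed
  show ?thesis
    by (rule Bochner_Integration.integrable_bound[OF integrable_mult_left[OF exp_a_int, of "exp (- m / \<epsilon>)"]])
      (use meas bound in auto)
qed

lemma integral_exp_pos:
  fixes f :: "'a \<Rightarrow> real"
  assumes "prob_space \<mu>" and "integrable \<mu> (\<lambda>x. exp (f x))"
  shows "(\<integral>x. exp (f x) \<partial>\<mu>) > 0"
proof -
  have "(\<integral>x. exp (f x) \<partial>\<mu>) \<noteq> 0"
    using integral_nonneg_eq_0_iff_AE[OF assms(2)] prob_space.AE_False[OF assms(1)] by simp
  moreover have "(\<integral>x. exp (f x) \<partial>\<mu>) \<ge> 0"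
    by simp
  ultimately show ?thesis
    by linarith
qed

lemma ctrans_le_add:
  fixes c :: "'a::topological_space \<times> 'b::topological_space \<Rightarrow> real"
  assumes "prob_space \<mu>" and "sets \<mu> = sets borel" and "c \<in> borel_measurable borel"
    and "\<forall>p. m \<le> c p" and "\<epsilon> > 0"
    and a_Lexp: "(\<lambda>x. ereal (a x)) \<in> Lexp \<epsilon> \<mu>" and b_Lexp: "(\<lambda>x. ereal (b x)) \<in> Lexp \<epsilon> \<mu>"
    and a_le: "\<forall>x. a x \<le> b x + d"
  shows "ctrans c \<epsilon> \<mu> (\<lambda>x. ereal (b x)) y \<le> ctrans c \<epsilon> \<mu> (\<lambda>x. ereal (a x)) y + d"
proof -
  define Ia where "Ia = (\<integral>x. exp ((a x - c (x, y)) / \<epsilon>) \<partial>\<mu>)"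
  define Ib where "Ib = (\<integral>x. exp ((b x - c (x, y)) / \<epsilon>) \<partial>\<mu>)"
  note int_a = integrable_exp_diff_cost[OF assms(2-5) a_Lexp, of y]
  note int_b = integrable_exp_diff_cost[OF assms(2-5) b_Lexp, of y]
  have "exp ((a x - c (x, y)) / \<epsilon>) \<le> exp (d / \<epsilon>) * exp ((b x - c (x, y)) / \<epsilon>)" for x
  proof -
    have "(a x - c (x, y)) / \<epsilon> \<le> (d + (b x - c (x, y))) / \<epsilon>"
      using a_le \<open>\<epsilon> > 0\<close> by (intro divide_right_mono) (auto simp: algebra_simps)
    then show ?thesis
      by (simp add: add_divide_distrib flip: exp_add)
  qed
  then have "Ia \<le> (\<integral>x. exp (d / \<epsilon>) * exp ((b x - c (x, y)) / \<epsilon>) \<partial>\<mu>)"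
    unfolding Ia_def using int_a int_b by (intro integral_mono) auto
  also have "\<dots> = exp (d / \<epsilon>) * Ib"
    unfolding Ib_def by simp
  finally have "Ia \<le> exp (d / \<epsilon>) * Ib" .
  moreover have "Ia > 0" "Ib > 0"
    unfolding Ia_def Ib_def using int_a int_b integral_exp_pos[OF \<open>prob_space \<mu>\<close>] by auto
  ultimately have "ln Ia \<le> ln (exp (d / \<epsilon>) * Ib)"
    by simp
  also have "\<dots> = d / \<epsilon> + ln Ib"
    using \<open>Ib > 0\<close> by (simp add: ln_mult)
  finally have "ln Ia \<le> d / \<epsilon> + ln Ib" .
  then have "\<epsilon> * ln Ia \<le> d + \<epsilon> * ln Ib"
    using \<open>\<epsilon> > 0\<close> by (simp add: field_simps)
  then show ?thesis
    unfolding ctrans_ereal Ia_def Ib_def by simp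
qed

lemma ctrans_dist_le:
  fixes c :: "'a::topological_space \<times> 'b::topological_space \<Rightarrow> real"
  assumes "prob_space \<mu>" and "sets \<mu> = sets borel" and "c \<in> borel_measurable borel"
    and "\<forall>p. m \<le> c p" and "\<epsilon> > 0"
    and "(\<lambda>x. ereal (a x)) \<in> Lexp \<epsilon> \<mu>" and "(\<lambda>x. ereal (b x)) \<in> Lexp \<epsilon> \<mu>"
    and "\<forall>x. \<bar>a x - b x\<bar> \<le> d"
  shows "\<bar>ctrans c \<epsilon> \<mu> (\<lambda>x. ereal (a x)) y - ctrans c \<epsilon> \<mu> (\<lambda>x. ereal (b x)) y\<bar> \<le> d"
proof -
  have "\<forall>x. a x \<le> b x + d"
    using assms(8) by (metis abs_le_D1 diff_le_eq add.commute)
  moreover have "\<forall>x. b x \<le> a x + d"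
    using assms(8) by (metis abs_le_D2 diff_le_eq add.commute minus_diff_eq)
  ultimately have "ctrans c \<epsilon> \<mu> (\<lambda>x. ereal (b x)) y \<le> ctrans c \<epsilon> \<mu> (\<lambda>x. ereal (a x)) y + d"
    and "ctrans c \<epsilon> \<mu> (\<lambda>x. ereal (a x)) y \<le> ctrans c \<epsilon> \<mu> (\<lambda>x. ereal (b x)) y + d"
    using ctrans_le_add[OF assms(1-5) assms(6,7)] ctrans_le_add[OF assms(1-5) assms(7,6)]
    by blast+
  then show ?thesis
    unfolding abs_le_iff by linarith
qed

theorem mainTheorem3:
  fixes \<mu> :: "'a::polish_space measure"
    and c :: "'a \<times> 'b::polish_space \<Rightarrow> real"
    and \<epsilon> \<delta> :: real
    and F :: "('a \<Rightarrow> ereal) set"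
  assumes "prob_space \<mu>"
    and "sets \<mu> = sets borel"
    and "c \<in> borel_measurable borel"
    and "\<exists>m. \<forall>p. m \<le> c p"
    and "\<epsilon> > 0"
    and "F \<subseteq> Lexp \<epsilon> \<mu>"
    and "\<delta> > 0"
  shows "covering_number \<delta> ((\<lambda>\<phi>. (\<lambda>y. ereal (ctrans c \<epsilon> \<mu> \<phi> y))) ` F)
           \<le> covering_number (\<delta> / 2) F"
proof -
  obtain m where "\<forall>p. m \<le> c p"
    using assms(4) by blast
  then show ?thesis
    using ctrans_dist_le[OF assms(1-3) _ assms(5)] assms(6)
    by (intro covering_number_image_le_half) blast
qed

end
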